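(* Let $\ell\ge2$, $R_0^*\in SO(3)$, $(y_i,x_i)$ with $y_i=R_0^*x_i+\epsilon_i$ ($i=1,\dots,\ell$), $c_1^2,\dots,c_\ell^2\ge0$, and $\hat w_0\in\mathbb{S}^3$ a global minimizer of (TLS-Q). Let $\zeta=\lambda_{\min2}(\sum_{i=1}^\ell Q_i)/\lambda_{\min}(\sum_{i=1}^\ell Q_i)$ and assume $\zeta\ge\ell/(\ell-1)$ and, for every $i$, $$c_i^2>\hat w_0^\top Q_i\hat w_0+\|Q_i\hat w_0\|_2+\frac{|d_i|+d_i}{2},\quad d_i:=\frac{\sum_{k=1}^\ell\hat w_0^\top Q_k\hat w_0}{\ell}-\hat w_0^\top Q_i\hat w_0+\frac{\lambda_{\max}\big(\sum_{j\ne i}(Q_i-Q_j)\big)}{\zeta(\ell-1)}.$$ Let $\hat V_0\in\mathbb{R}^{4\times3}$ satisfy $\hat V_0^\top\hat w_0=0$, $\hat V_0^\top\hat V_0=I_3$, and $\hat V=[\hat V_0,\ \hat w_0]\in\mathbb{R}^{4\times4}$. Define $$\hat T_i:=\frac{\zeta-\frac{\ell}{\ell-1}}{\zeta}\hat V_0^\top Q_i\hat V_0+\frac{\sum_{j=1}^\ell\hat V_0^\top Q_j\hat V_0}{\zeta(\ell-1)}-\frac{\sum_{k=1}^\ell\hat w_0^\top Q_k\hat w_0}{\ell}I_3,\qquad \hat S_i:=\hat V\begin{bmatrix}\hat T_i&0\\0&0\end{bmatrix}\hat V^\top .$$ Then $\sum_{i=1}^\ell\hat S_i=\sum_{i=1}^\ell\big(Q_i-(\hat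 w_0^\top Q_i\hat w_0)I_4\big)$, $\hat S_i\succeq0$ for every $i$, and $\hat S_i+c_i^2I_4-Q_i\succ0$ for every $i$.
   Context: For $w=[w_1;w_2;w_3;w_4]\in\mathbb{S}^3$, $R(w)=\begin{bmatrix} w_1^2+w_2^2-w_3^2-w_4^2 & 2(w_2w_3-w_1w_4) & 2(w_2w_4+w_1w_3)\\ 2(w_2w_3+w_1w_4) & w_1^2+w_3^2-w_2^2-w_4^2 & 2(w_3w_4-w_1w_2)\\ 2(w_2w_4-w_1w_3) & 2(w_3w_4+w_1w_2) & w_1^2+w_4^2-w_2^2-w_3^2\end{bmatrix}\in SO(3)$. $Q_i$ is the unique symmetric $4\times4$ matrix with $w^\top Q_iw=\|y_i-R(w)x_i\|_2^2$ for all $w\in\mathbb{S}^3$. (TLS-Q) is $\min_{w_0\in\mathbb{S}^3}\sum_{i=1}^\ell\min\{w_0^\top Q_iw_0,c_i^2\}$. $\lambda_{\min},\lambda_{\min2},\lambda_{\max}$ denote smallest, second smallest (with multiplicity), largest eigenvalue. *)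

theory Defs
  imports "HOL-Analysis.Analysis" "HOL-Computational_Algebra.Polynomial"
begin

text \<open>Rotation matrix R(w) of a (unit) quaternion w = [w1;w2;w3;w4], components w$1,...,w$4.\<close>
definition rotq :: "real^4 \<Rightarrow> real^3^3" where
  "rotq w = (let w1 = w$1; w2 = w$2; w3 = w$3; w4 = w$4 in
     vector [vector [w1^2+w2^2-w3^2-w4^2, 2*(w2*w3-w1*w4), 2*(w2*w4+w1*w3)],
             vector [2*(w2*w3+w1*w4), w1^2+w3^2-w2^2-w4^2, 2*(w3*w4-w1*w2)],
             vector [2*(w2*w4-w1*w3), 2*(w3*w4+w1*w2), w1^2+w4^2-w2^2-w3^2]])"

definition Qmat :: "real^3 \<Rightarrow> real^3 \<Rightarrow> real^4^4" where
  "Qmat x y = (THE Q. transpose Q = Q \<and>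
      (\<forall>w::real^4. norm w = 1 \<longrightarrow> w \<bullet> (Q *v w) = (norm (y - rotq w *v x))^2))"

definition tls_obj :: "nat \<Rightarrow> (nat \<Rightarrow> real^4^4) \<Rightarrow> (nat \<Rightarrow> real) \<Rightarrow> real^4 \<Rightarrow> real" where
  "tls_obj l Q c2 w = (\<Sum>i=1..l. min (w \<bullet> (Q i *v w)) (c2 i))"

definition charpoly :: "real^'n^'n \<Rightarrow> real poly" where
  "charpoly A = det (\<chi> i j. (if i = j then [:0, 1:] else 0) - [:A $ i $ j:])"

definition eig_min :: "real^'n^'n \<Rightarrow> real" where
  "eig_min A = Min {t. poly (charpoly A) t = 0}"

definition eig_max :: "real^'n^'n \<Rightarrow> real" where
  "eig_max A = Max {t. poly (charpoly A) t = 0}"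

text \<open>Second smallest eigenvalue with multiplicity.\<close>
definition eig_min2 :: "real^'n^'n \<Rightarrow> real" where
  "eig_min2 A = (if order (eig_min A) (charpoly A) \<ge> 2 then eig_min A
                 else Min {t. poly (charpoly A) t = 0 \<and> t > eig_min A})"

definition psd :: "real^'n^'n \<Rightarrow> bool" where
  "psd A \<longleftrightarrow> transpose A = A \<and> (\<forall>x. 0 \<le> x \<bullet> (A *v x))"

definition pd :: "real^'n^'n \<Rightarrow> bool" where
  "pd A \<longleftrightarrow> transpose A = A \<and> (\<forall>x. x \<noteq> 0 \<longrightarrow> 0 < x \<bullet> (A *v x))"

definition idx43 :: "4 \<Rightarrow> 3" where
  "idx43 j = (if j = 1 then 1 else if j = 2 then 2 else 3)"

definition hcat :: "real^3^4 \<Rightarrow> real^4 \<Rightarrow> real^4^4" where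
  "hcat V w = (\<chi> i j. if j = 4 then w $ i else V $ i $ idx43 j)"

definition blk :: "real^3^3 \<Rightarrow> real^4^4" where
  "blk T = (\<chi> i j. if i = 4 \<or> j = 4 then 0 else T $ idx43 i $ idx43 j)"

end

theory Submission
  imports Defs
begin

(*
  Since c_i^2 > w0' Q_i w0 for every i, near w0 every summand of the TLS objective is on its
  quadratic branch, so w0 locally, and hence (A = sum Q_i being symmetric) globally, minimises the
  Rayleigh quotient of A: A w0 = mu w0 with mu = lambda_min(A), and the form of A is at least
  lambda_min2(A) = zeta mu on the orthogonal complement of w0.

  For z = y + s w0 with y = V0 V0' z, the form of S_i is alpha y'Q_i y + beta y'A y - (mu/l) |y|^2
  with alpha = (zeta - l/(l-1))/zeta >= 0, beta = 1/(zeta (l-1)) and alpha + l beta = 1. Summing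
  over i gives y'A y - mu |y|^2, the form of sum_i (Q_i - w0'Q_i w0 I); the spectral gap gives
  S_i >= 0; and in the form of S_i + c_i^2 I - Q_i the term beta (y'A y - l y'Q_i y) is at least
  -beta lambda_max(sum_{j<>i} (Q_i - Q_j)) |y|^2 and the cross term 2 s y'Q_i w0 at most
  |Q_i w0| |z|^2, which is what the lower bound on c_i^2 pays for.
*)

section \<open>Quadratic forms of real matrices\<close>

lemma inner_matrix_vector_transpose: "(x::real^'n) \<bullet> (A *v y) = (transpose A *v x) \<bullet> y"
  by (metis dot_lmul_matrix transpose_matrix_vector)

lemma symmetric_inner_matrix_vector:
  "transpose A = A \<Longrightarrow> (x::real^'n) \<bullet> (A *v y) = y \<bullet> (A *v x)"
  by (metis inner_matrix_vector_transpose inner_commute)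

lemma transpose_zero [simp]: "transpose 0 = (0::'a::zero^'n^'m)"
  by (simp add: transpose_def vec_eq_iff)

lemma transpose_add: "transpose (A + B) = transpose A + transpose (B::'a::comm_semiring_1^'n^'m)"
  by (simp add: transpose_def vec_eq_iff)

lemma transpose_diff: "transpose (A - B) = transpose A - transpose (B::'a::comm_ring_1^'n^'m)"
  by (simp add: transpose_def vec_eq_iff)

lemma transpose_sum: "transpose (\<Sum>i\<in>I. f i) = (\<Sum>i\<in>I. transpose (f i :: 'a::comm_semiring_1^'n^'m))"
  by (induction I rule: infinite_finite_induct) (simp_all add: transpose_add)

lemma matrix_vector_mult_uminus: "(- A) *v x = - (A *v (x::real^'n))"
  by (simp add: vec_eq_iff matrix_vector_mult_def sum_negf)

lemma quadratic_form_sum: "x \<bullet> ((\<Sum>i\<in>I. f i) *v x) = (\<Sum>i\<in>I. x \<bullet> (f i *v (x::real^'n)))"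
  by (induction I rule: infinite_finite_induct) (simp_all add: matrix_vector_mult_add_rdistrib inner_add_right)

lemma quadratic_form_scaleR: "(c *\<^sub>R x) \<bullet> (A *v (c *\<^sub>R x)) = c\<^sup>2 * (x \<bullet> (A *v (x::real^'n)))"
  by (simp add: matrix_vector_mult_scaleR power2_eq_square)

lemma quadratic_form_sgn: "x \<bullet> (A *v x) = (norm x)\<^sup>2 * (sgn x \<bullet> (A *v sgn (x::real^'n)))"
proof (cases "x = 0")
  case False
  then have "x = norm x *\<^sub>R sgn x" by (simp add: sgn_div_norm)
  then show ?thesis by (metis quadratic_form_scaleR)
qed simp

lemma quadratic_form_ge_by_sgn:
  assumes "m \<le> sgn x \<bullet> (A *v sgn x)"
  shows "m * (norm x)\<^sup>2 \<le> x \<bullet> (A *v (x::real^'n))"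
  using mult_right_mono[OF assms zero_le_power2[of "norm x"]]
  by (subst quadratic_form_sgn) (simp add: mult.commute)

lemma quadratic_form_eq_on_sphere:
  assumes "\<And>w. norm w = 1 \<Longrightarrow> w \<bullet> (A *v w) = w \<bullet> (B *v (w::real^'n))"
  shows "x \<bullet> (A *v x) = x \<bullet> (B *v x)"
  using assms[of "sgn x"] by (cases "x = 0") (simp_all add: quadratic_form_sgn[of x] norm_sgn)

lemma quadratic_form_add_scaleR:
  assumes "transpose A = A"
  shows "(x + t *\<^sub>R v) \<bullet> (A *v (x + t *\<^sub>R v))
           = x \<bullet> (A *v x) + 2 * t * (x \<bullet> (A *v v)) + t\<^sup>2 * (v \<bullet> (A *v (v::real^'n)))"
  using symmetric_inner_matrix_vector[OF assms, of x v]
  by (simp add: matrix_vector_right_distrib matrix_vector_mult_scaleR inner_add_left inner_add_right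
      power2_eq_square algebra_simps)

lemma quadratic_form_conjugate:
  fixes V :: "real^'k^'n" and M :: "real^'n^'n" and u :: "real^'k"
  shows "u \<bullet> ((transpose V ** M ** V) *v u) = (V *v u) \<bullet> (M *v (V *v u))"
proof -
  have "(transpose V ** M ** V) *v u = transpose V *v (M *v (V *v u))"
    by (metis matrix_vector_mul_assoc)
  moreover have "u \<bullet> (transpose V *v y) = (V *v u) \<bullet> y" for y
    using inner_matrix_vector_transpose[of u "transpose V" y] by (simp only: transpose_transpose)
  ultimately show ?thesis by simp
qed

lemma symmetric_matrix_eqI:
  fixes A B :: "real^'n^'n"
  assumes "transpose A = A" "transpose B = B" "\<And>x. x \<bullet> (A *v x) = x \<bullet> (B *v x)"
  shows "A = B"
proof -
  have bilinear: "x \<bullet> (A *v y) = x \<bullet> (B *v y)" for x y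
    using assms(3)[of "x + 1 *\<^sub>R y"] assms(3)[of x] assms(3)[of y]
    unfolding quadratic_form_add_scaleR[OF assms(1)] quadratic_form_add_scaleR[OF assms(2)] by simp
  have "A $ i $ j = B $ i $ j" for i j
    using bilinear[of "axis i 1" "axis j 1"] by (simp add: matrix_vector_mult_basis inner_axis' column_def)
  then show ?thesis by (simp add: vec_eq_iff)
qed

lemma quadratic_form_sum_differences:
  fixes Q :: "nat \<Rightarrow> real^'n^'n"
  assumes "i \<in> {1..l}"
  shows "x \<bullet> ((\<Sum>j\<in>{1..l}-{i}. Q i - Q j) *v x)
           = real l * (x \<bullet> (Q i *v x)) - x \<bullet> ((\<Sum>j=1..l. Q j) *v x)"
proof -
  have "x \<bullet> ((\<Sum>j\<in>{1..l}-{i}. Q i - Q j) *v x)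
      = (\<Sum>j\<in>{1..l}-{i}. x \<bullet> (Q i *v x) - x \<bullet> (Q j *v x))"
    by (simp only: quadratic_form_sum matrix_vector_mult_diff_rdistrib inner_diff_right)
  also have "\<dots> = real (l - 1) * (x \<bullet> (Q i *v x)) - (\<Sum>j\<in>{1..l}-{i}. x \<bullet> (Q j *v x))"
    using assms by (simp add: sum_subtractf)
  also have "(\<Sum>j\<in>{1..l}-{i}. x \<bullet> (Q j *v x)) = x \<bullet> ((\<Sum>j=1..l. Q j) *v x) - x \<bullet> (Q i *v x)"
    using assms by (simp add: quadratic_form_sum sum_diff1)
  finally show ?thesis
    using assms by (simp add: of_nat_diff algebra_simps)
qed

lemma cross_term_le:
  fixes y v :: "'a::real_inner"
  shows "2 * s * (y \<bullet> v) \<le> norm v * ((norm y)\<^sup>2 + s\<^sup>2)"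
proof -
  have "s * (y \<bullet> v) \<le> \<bar>s\<bar> * (norm y * norm v)"
    using Cauchy_Schwarz_ineq2[of y v]
    by (metis abs_ge_self abs_ge_zero abs_mult mult_left_mono order_trans)
  moreover have "2 * \<bar>s\<bar> * norm y \<le> (norm y)\<^sup>2 + s\<^sup>2"
    using zero_le_power2[of "\<bar>s\<bar> - norm y"] by (simp add: power2_diff algebra_simps)
  then have "2 * \<bar>s\<bar> * norm y * norm v \<le> ((norm y)\<^sup>2 + s\<^sup>2) * norm v"
    by (rule mult_right_mono) simp
  ultimately show ?thesis by (simp add: algebra_simps)
qed

section \<open>Minimisers of the Rayleigh quotient\<close>

lemma nonneg_quadratic_near_zero:
  fixes a b d :: real
  assumes "0 < d" and nonneg: "\<And>t. \<bar>t\<bar> < d \<Longrightarrow> 0 \<le> 2 * t * b + t\<^sup>2 * a"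
  shows "b = 0" and "0 \<le> a"
proof -
  show b: "b = 0"
  proof (rule ccontr)
    assume "b \<noteq> 0"
    define s where "s = min (d / 2) (\<bar>b\<bar> / (\<bar>a\<bar> + 1))"
    have s: "0 < s" "s < d" "s * (\<bar>a\<bar> + 1) \<le> \<bar>b\<bar>"
      using \<open>0 < d\<close> \<open>b \<noteq> 0\<close> by (auto simp: s_def pos_le_divide_eq[symmetric] min.coboundedI2)
    define t where "t = - sgn b * s"
    have "\<bar>t\<bar> = s" "2 * t * b = - 2 * s * \<bar>b\<bar>"
      using s \<open>b \<noteq> 0\<close> by (auto simp: t_def abs_mult sgn_if)
    moreover have "t\<^sup>2 * a \<le> s * (s * \<bar>a\<bar>)"
    proof -
      have "t\<^sup>2 = s * s" using \<open>\<bar>t\<bar> = s\<close> by (metis power2_abs power2_eq_square)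
      moreover have "s * s * a \<le> s * s * \<bar>a\<bar>" by (rule mult_left_mono) auto
      ultimately show ?thesis by (simp add: mult.assoc)
    qed
    moreover have "s * (s * \<bar>a\<bar>) < s * \<bar>b\<bar>"
      using s by (intro mult_strict_left_mono) (auto simp: algebra_simps)
    moreover have "0 < s * \<bar>b\<bar>" using s(1) \<open>b \<noteq> 0\<close> by simp
    ultimately have "2 * t * b + t\<^sup>2 * a < 0" by linarith
    with nonneg[of t] \<open>\<bar>t\<bar> = s\<close> \<open>s < d\<close> show False by simp
  qed
  have "0 \<le> (d / 2)\<^sup>2 * a" using nonneg[of "d / 2"] \<open>0 < d\<close> b by simp
  then show "0 \<le> a" using \<open>0 < d\<close> by (simp add: zero_le_mult_iff)
qed

lemma rayleigh_min_exists:
  fixes A :: "real^'n^'n"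
  assumes "subspace U" "y \<in> U" "y \<noteq> 0"
  obtains x where "x \<in> U" "norm x = 1" "\<And>y. y \<in> U \<Longrightarrow> (x \<bullet> (A *v x)) * (norm y)\<^sup>2 \<le> y \<bullet> (A *v y)"
proof -
  let ?S = "sphere 0 1 \<inter> U"
  have "compact ?S"
    by (intro compact_Int_closed compact_sphere closed_subspace assms(1))
  moreover have "sgn y \<in> ?S"
    using assms by (simp add: norm_sgn sgn_div_norm subspace_scale)
  moreover have "continuous_on ?S (\<lambda>x. x \<bullet> (A *v x))"
    by (intro continuous_intros linear_continuous_on matrix_vector_mul_linear)
  ultimately obtain x where x: "x \<in> ?S" and min: "\<And>z. z \<in> ?S \<Longrightarrow> x \<bullet> (A *v x) \<le> z \<bullet> (A *v z)"
    using continuous_attains_inf[of ?S "\<lambda>x. x \<bullet> (A *v x)"] by blast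
  have bound: "(x \<bullet> (A *v x)) * (norm z)\<^sup>2 \<le> z \<bullet> (A *v z)" if "z \<in> U" for z
  proof (cases "z = 0")
    case False
    then have "sgn z \<in> ?S"
      using that assms(1) by (simp add: norm_sgn sgn_div_norm subspace_scale)
    then show ?thesis by (intro quadratic_form_ge_by_sgn min)
  qed simp
  show thesis using x bound by (intro that) auto
qed

lemma rayleigh_min_eigenvector:
  fixes A :: "real^'n^'n"
  assumes sym: "transpose A = A" and U: "subspace U" and invariant: "\<And>y. y \<in> U \<Longrightarrow> A *v y \<in> U"
    and x: "x \<in> U" "norm x = 1"
    and min: "\<And>y. y \<in> U \<Longrightarrow> (x \<bullet> (A *v x)) * (norm y)\<^sup>2 \<le> y \<bullet> (A *v y)"
  shows "A *v x = (x \<bullet> (A *v x)) *\<^sub>R x"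
proof -
  define m where "m = x \<bullet> (A *v x)"
  \<comment> \<open>The residual \<open>r\<close> lies in \<open>U\<close> and is orthogonal to \<open>x\<close>; optimality in direction \<open>r\<close>
     gives \<open>r \<bullet> r = x \<bullet> (A *v r) = 0\<close>.\<close>
  define r where "r = A *v x - m *\<^sub>R x"
  have "r \<in> U" unfolding r_def using U x invariant by (simp add: subspace_diff subspace_scale)
  have "x \<bullet> x = 1" using x by (simp add: dot_square_norm)
  then have "x \<bullet> r = 0" by (simp add: r_def m_def inner_diff_right)
  have "0 \<le> 2 * t * (x \<bullet> (A *v r)) + t\<^sup>2 * (r \<bullet> (A *v r) - m * (norm r)\<^sup>2)" for t
  proof -
    have "x + t *\<^sub>R r \<in> U" using U x \<open>r \<in> U\<close> by (simp add: subspace_add subspace_scale)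
    moreover have "(norm (x + t *\<^sub>R r))\<^sup>2 = 1 + t\<^sup>2 * (norm r)\<^sup>2"
      using norm_add_Pythagorean[of x "t *\<^sub>R r"] \<open>x \<bullet> r = 0\<close> x(2)
      by (simp add: orthogonal_def power_mult_distrib)
    ultimately show ?thesis
      using min[of "x + t *\<^sub>R r"] unfolding quadratic_form_add_scaleR[OF sym] m_def
      by (simp add: algebra_simps)
  qed
  then have "x \<bullet> (A *v r) = 0"
    using nonneg_quadratic_near_zero(1)[OF zero_less_one] by blast
  moreover have "x \<bullet> (A *v r) = r \<bullet> (A *v x)"
    by (rule symmetric_inner_matrix_vector[OF sym])
  moreover have "r \<bullet> (A *v x) = r \<bullet> r"
  proof -
    have "A *v x = r + m *\<^sub>R x" by (simp add: r_def)
    moreover have "r \<bullet> x = 0" using \<open>x \<bullet> r = 0\<close> by (simp add: inner_commute)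
    ultimately show ?thesis by (simp add: inner_add_right)
  qed
  ultimately have "r = 0" by simp
  then show ?thesis by (simp add: r_def m_def)
qed

lemma rayleigh_local_min_orthogonal:
  fixes A :: "real^'n^'n"
  assumes sym: "transpose A = A" and w: "norm w = 1"
    and local_min: "\<forall>\<^sub>F v in nhds w. norm v = 1 \<longrightarrow> w \<bullet> (A *v w) \<le> v \<bullet> (A *v v)"
    and v: "w \<bullet> v = 0"
  shows "w \<bullet> (A *v v) = 0" and "(w \<bullet> (A *v w)) * (norm v)\<^sup>2 \<le> v \<bullet> (A *v v)"
proof -
  define m where "m = w \<bullet> (A *v w)"
  \<comment> \<open>First- and second-order optimality along the curve \<open>sgn (w + t *\<^sub>R v)\<close>.\<close>
  have norm_line: "(norm (w + t *\<^sub>R v))\<^sup>2 = 1 + t\<^sup>2 * (norm v)\<^sup>2" for t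
    using norm_add_Pythagorean[of w "t *\<^sub>R v"] v w by (simp add: orthogonal_def power_mult_distrib)
  then have nonzero: "w + t *\<^sub>R v \<noteq> 0" for t
    by (metis add_pos_nonneg mult_nonneg_nonneg zero_le_power2 zero_less_one norm_zero
        power_zero_numeral less_irrefl)
  have "isCont (\<lambda>t. sgn (w + t *\<^sub>R v)) 0"
    using w by (intro continuous_intros) auto
  then have "((\<lambda>t. sgn (w + t *\<^sub>R v)) \<longlongrightarrow> sgn (w + 0 *\<^sub>R v)) (nhds 0)"
    using tendsto_at_iff_tendsto_nhds[of "\<lambda>t. sgn (w + t *\<^sub>R v)" 0] by (simp add: isCont_def)
  then have "((\<lambda>t. sgn (w + t *\<^sub>R v)) \<longlongrightarrow> w) (nhds 0)"
    using w by (simp add: sgn_div_norm)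
  from filterlim_iff[THEN iffD1, rule_format, OF this local_min]
  obtain d where "0 < d"
    and d: "\<And>t. \<bar>t\<bar> < d \<Longrightarrow> m \<le> sgn (w + t *\<^sub>R v) \<bullet> (A *v sgn (w + t *\<^sub>R v))"
    using nonzero unfolding eventually_nhds_metric dist_real_def m_def by (auto simp: norm_sgn)
  have "0 \<le> 2 * t * (w \<bullet> (A *v v)) + t\<^sup>2 * (v \<bullet> (A *v v) - m * (norm v)\<^sup>2)" if "\<bar>t\<bar> < d" for t
  proof -
    have "m * (norm (w + t *\<^sub>R v))\<^sup>2 \<le> (w + t *\<^sub>R v) \<bullet> (A *v (w + t *\<^sub>R v))"
      using d[OF that] by (rule quadratic_form_ge_by_sgn)
    then show ?thesis
      unfolding norm_line quadratic_form_add_scaleR[OF sym] m_def by (simp add: algebra_simps)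
  qed
  from nonneg_quadratic_near_zero[OF \<open>0 < d\<close> this]
  show "w \<bullet> (A *v v) = 0" and "(w \<bullet> (A *v w)) * (norm v)\<^sup>2 \<le> v \<bullet> (A *v v)"
    by (simp_all add: m_def)
qed

lemma rayleigh_local_min_global:
  fixes A :: "real^'n^'n"
  assumes sym: "transpose A = A" and w: "norm w = 1"
    and local_min: "\<forall>\<^sub>F v in nhds w. norm v = 1 \<longrightarrow> w \<bullet> (A *v w) \<le> v \<bullet> (A *v v)"
  shows "(w \<bullet> (A *v w)) * (norm x)\<^sup>2 \<le> x \<bullet> (A *v x)"
proof -
  define s where "s = w \<bullet> x"
  define v where "v = x - s *\<^sub>R w"
  have "w \<bullet> w = 1" using w by (simp add: dot_square_norm)
  then have "w \<bullet> v = 0" by (simp add: v_def s_def inner_diff_right)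
  note orth = rayleigh_local_min_orthogonal[OF sym w local_min this]
  have x: "x = v + s *\<^sub>R w" by (simp add: v_def)
  have "(norm x)\<^sup>2 = (norm v)\<^sup>2 + s\<^sup>2"
    using norm_add_Pythagorean[of v "s *\<^sub>R w"] \<open>w \<bullet> v = 0\<close> w
    by (simp add: x orthogonal_def inner_commute power_mult_distrib)
  moreover have "x \<bullet> (A *v x) = v \<bullet> (A *v v) + s\<^sup>2 * (w \<bullet> (A *v w))"
    using orth(1) symmetric_inner_matrix_vector[OF sym, of v w]
    by (simp add: x quadratic_form_add_scaleR[OF sym])
  ultimately show ?thesis
    using orth(2) by (simp add: algebra_simps)
qed

section \<open>Characteristic polynomial and extreme eigenvalues\<close>

lemma poly_det: "poly (det M) t = det (\<chi> i j. poly (M $ i $ j) t)"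
  unfolding det_def poly_sum poly_mult poly_prod by simp

lemma poly_charpoly: "poly (charpoly A) t = det (mat t - A)"
  unfolding charpoly_def poly_det by (rule arg_cong[where f = det]) (simp add: vec_eq_iff mat_def)

lemma charpoly_root_iff_eigenvalue:
  "poly (charpoly A) t = 0 \<longleftrightarrow> (\<exists>z. z \<noteq> 0 \<and> A *v z = t *\<^sub>R (z::real^'n))"
proof -
  have "mat t = t *\<^sub>R (mat 1 :: real^'n^'n)" by (simp add: vec_eq_iff mat_def)
  then have "(mat t - A) *v z = t *\<^sub>R z - A *v z" for z
    by (simp add: matrix_vector_mult_diff_rdistrib scaleR_matrix_vector_assoc[symmetric])
  then have "(mat t - A) *v z = 0 \<longleftrightarrow> A *v z = t *\<^sub>R z" for z
    by (metis right_minus_eq eq_commute)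
  moreover have "det (mat t - A) \<noteq> 0 \<longleftrightarrow> (\<forall>z. (mat t - A) *v z = 0 \<longrightarrow> z = 0)"
    by (simp add: invertible_det_nz[symmetric] invertible_left_inverse matrix_left_invertible_ker)
  ultimately show ?thesis
    unfolding poly_charpoly by blast
qed

lemma charpoly_nonzero: "charpoly (A::real^'n^'n) \<noteq> 0"
proof
  assume "charpoly A = 0"
  obtain K where "0 < K" and K: "\<And>z. norm (A *v z) \<le> norm z * K"
    using bounded_linear.pos_bounded[OF matrix_vector_mul_bounded_linear] by blast
  obtain z where "z \<noteq> 0" "A *v z = (K + 1) *\<^sub>R z"
    using \<open>charpoly A = 0\<close> charpoly_root_iff_eigenvalue[of A "K + 1"] by auto
  then have "(K + 1) * norm z \<le> norm z * K" using K[of z] \<open>0 < K\<close> by simp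
  then show False using \<open>z \<noteq> 0\<close> by (simp add: algebra_simps)
qed

lemma finite_charpoly_roots: "finite {t. poly (charpoly (A::real^'n^'n)) t = 0}"
  by (rule poly_roots_finite[OF charpoly_nonzero])

lemma eigenvalue_ge_rayleigh_bound:
  assumes "z \<noteq> 0" "A *v z = t *\<^sub>R z" "\<And>x. m * (norm x)\<^sup>2 \<le> x \<bullet> (A *v (x::real^'n))"
  shows "m \<le> t"
  using assms(3)[of z] assms(1,2) by (simp add: dot_square_norm)

lemma eig_min_eqI:
  fixes A :: "real^'n^'n"
  assumes "z \<noteq> 0" "A *v z = m *\<^sub>R z" "\<And>x. m * (norm x)\<^sup>2 \<le> x \<bullet> (A *v x)"
  shows "eig_min A = m"
  unfolding eig_min_def
proof (rule Min_eqI[OF finite_charpoly_roots])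
  show "m \<in> {t. poly (charpoly A) t = 0}"
    using assms(1,2) charpoly_root_iff_eigenvalue by blast
  show "m \<le> t" if "t \<in> {t. poly (charpoly A) t = 0}" for t
    using that eigenvalue_ge_rayleigh_bound[OF _ _ assms(3)] charpoly_root_iff_eigenvalue by blast
qed

lemma rayleigh_global_min_eig_min:
  fixes A :: "real^'n^'n"
  assumes sym: "transpose A = A" and w: "norm w = 1"
    and min: "\<And>x. (w \<bullet> (A *v w)) * (norm x)\<^sup>2 \<le> x \<bullet> (A *v x)"
  shows "A *v w = (w \<bullet> (A *v w)) *\<^sub>R w" and "eig_min A = w \<bullet> (A *v w)"
proof -
  show eigen: "A *v w = (w \<bullet> (A *v w)) *\<^sub>R w"
    using rayleigh_min_eigenvector[OF sym subspace_UNIV] w min by blast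
  have "w \<noteq> 0" using w by auto
  then show "eig_min A = w \<bullet> (A *v w)"
    using eig_min_eqI[OF _ eigen min] by blast
qed

lemma quadratic_form_le_eig_max:
  fixes A :: "real^'n^'n"
  assumes sym: "transpose A = A"
  shows "x \<bullet> (A *v x) \<le> eig_max A * (norm x)\<^sup>2"
proof -
  have sym': "transpose (- A) = - A"
    using sym by (simp add: transpose_def vec_eq_iff)
  obtain z where "norm z = 1"
    and min: "\<And>y. (z \<bullet> (- A *v z)) * (norm y)\<^sup>2 \<le> y \<bullet> (- A *v y)"
    using rayleigh_min_exists[OF subspace_UNIV UNIV_I, of "axis undefined 1" "- A"] by auto
  define M where "M = z \<bullet> (A *v z)"
  have "- A *v z = (z \<bullet> (- A *v z)) *\<^sub>R z"
    using rayleigh_min_eigenvector[OF sym' subspace_UNIV] \<open>norm z = 1\<close> min by blast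
  then have "A *v z = M *\<^sub>R z"
    by (simp add: M_def matrix_vector_mult_uminus)
  then have "M \<le> eig_max A"
    unfolding eig_max_def using \<open>norm z = 1\<close>
    by (intro Max_ge finite_charpoly_roots) (auto simp: charpoly_root_iff_eigenvalue intro!: exI[of _ z])
  moreover have "x \<bullet> (A *v x) \<le> M * (norm x)\<^sup>2"
    using min[of x] by (simp add: M_def matrix_vector_mult_uminus)
  ultimately show ?thesis
    by (meson mult_right_mono order_trans zero_le_power2)
qed

lemma sum_differences_le_eig_max:
  fixes Q :: "nat \<Rightarrow> real^'n^'n"
  assumes "\<And>j. transpose (Q j) = Q j" "i \<in> {1..l}"
  shows "real l * (x \<bullet> (Q i *v x)) - x \<bullet> ((\<Sum>j=1..l. Q j) *v x)
           \<le> eig_max (\<Sum>j\<in>{1..l}-{i}. Q i - Q j) * (norm x)\<^sup>2"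
proof -
  have "transpose (\<Sum>j\<in>{1..l}-{i}. Q i - Q j) = (\<Sum>j\<in>{1..l}-{i}. Q i - Q j)"
    by (simp add: transpose_sum transpose_diff assms(1))
  from quadratic_form_le_eig_max[OF this, of x] show ?thesis
    by (simp only: quadratic_form_sum_differences[OF assms(2)])
qed

lemma charpoly_matrix_mult_eigencolumn:
  fixes A P :: "real^'n^'n"
  assumes "A *v column j P = lam *\<^sub>R column j P"
  shows "((\<chi> i k. (if i = k then [:0, 1:] else 0) - [:A $ i $ k:]) ** (\<chi> i k. [:P $ i $ k:])) $ i $ j
           = [:-lam, 1:] * [:P $ i $ j:]"
    (is "?G $ i $ j = _")
proof -
  have "poly (?G $ i $ j) t = t * P $ i $ j - (A *v column j P) $ i" for t
  proof -
    have "poly (?G $ i $ j) t = (\<Sum>k\<in>UNIV. ((if i = k then t else 0) - A $ i $ k) * P $ k $ j)"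
      unfolding matrix_matrix_mult_def by (simp add: poly_sum) (rule sum.cong, auto)
    also have "\<dots> = (\<Sum>k\<in>UNIV. (if i = k then t * P $ k $ j else 0) - A $ i $ k * P $ k $ j)"
      by (rule sum.cong) (auto simp: left_diff_distrib)
    also have "\<dots> = t * P $ i $ j - (A *v column j P) $ i"
      by (simp add: sum_subtractf matrix_vector_mult_def column_def)
    finally show ?thesis .
  qed
  then have "poly (?G $ i $ j) = poly ([:-lam, 1:] * [:P $ i $ j:])"
    using assms by (simp add: fun_eq_iff column_def algebra_simps)
  then show ?thesis by (simp add: poly_eq_poly_eq_iff)
qed

lemma charpoly_mult_det_divisible:
  fixes A P :: "real^'n^'n"
  assumes "ja \<noteq> jb"
    and eigen: "A *v column ja P = lam *\<^sub>R column ja P" "A *v column jb P = lam *\<^sub>R column jb P"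
  shows "[:-lam, 1:]\<^sup>2 dvd charpoly A * det (\<chi> i j. [:P $ i $ j:])"
proof -
  define G :: "real poly^'n^'n"
    where "G = (\<chi> i j. (if i = j then [:0, 1:] else 0) - [:A $ i $ j:]) ** (\<chi> i j. [:P $ i $ j:])"
  define c where "c = [:-lam, 1:]"
  have columns: "G $ i $ ja = c * [:P $ i $ ja:]" "G $ i $ jb = c * [:P $ i $ jb:]" for i
    unfolding G_def c_def by (intro charpoly_matrix_mult_eigencolumn eigen)+
  define a where "a j = ((\<chi> i. [:P $ i $ j:]) :: real poly^'n)" for j
  define r where "r j = transpose G $ j" for j
  have rows: "transpose G = (\<chi> j. if j = ja then c *s a j else if j = jb then c *s a j else r j)"
    unfolding r_def a_def using columns by (simp add: vec_eq_iff transpose_def)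
  have "det G = det (transpose G)" by simp
  also have "\<dots> = c * det (\<chi> j. if j = ja then a j else if j = jb then c *s a j else r j)"
    unfolding rows by (rule det_row_mul)
  also have "(\<chi> j. if j = ja then a j else if j = jb then c *s a j else r j)
           = (\<chi> j. if j = jb then c *s a j else if j = ja then a j else r j)"
    using \<open>ja \<noteq> jb\<close> by (simp add: vec_eq_iff)
  also have "det \<dots> = c * det (\<chi> j. if j = jb then a j else if j = ja then a j else r j)"
    by (rule det_row_mul)
  finally have "det G = c\<^sup>2 * det (\<chi> j. if j = jb then a j else if j = ja then a j else r j)"
    by (simp add: power2_eq_square)
  moreover have "det G = charpoly A * det (\<chi> i j. [:P $ i $ j:])"
    unfolding G_def det_mul charpoly_def by (rule refl)
  ultimately have "charpoly A * det (\<chi> i j. [:P $ i $ j:])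
      = c\<^sup>2 * det (\<chi> j. if j = jb then a j else if j = ja then a j else r j)"
    by simp
  then show ?thesis
    unfolding c_def by (rule dvdI)
qed

lemma invertible_matrix_with_columns:
  fixes p q :: "real^'n"
  assumes "independent {p, q}" "p \<noteq> q"
  obtains P :: "real^'n^'n" and ja jb
  where "ja \<noteq> jb" "column ja P = p" "column jb P = q" "det P \<noteq> 0"
proof -
  obtain B where B: "{p, q} \<subseteq> B" "B \<subseteq> UNIV" "independent B" "UNIV \<subseteq> span B"
    by (rule maximal_independent_subset_extend[OF subset_UNIV assms(1)])
  have "card B = CARD('n)"
    using basis_card_eq_dim[OF B(2,4,3)] by (simp add: DIM_cart)
  moreover have "finite B" using B(3) by (rule independent_imp_finite)
  ultimately have "\<exists>h. bij_betw h (UNIV :: 'n set) B"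
    by (intro finite_same_card_bij) simp_all
  then obtain h :: "'n \<Rightarrow> real^'n" where h: "bij_betw h UNIV B" by blast
  define P :: "real^'n^'n" where "P = (\<chi> i j. h j $ i)"
  have column_P: "column j P = h j" for j
    by (simp add: P_def column_def vec_eq_iff)
  have independent_coefficients: "\<And>u. (\<Sum>v\<in>B. u v *\<^sub>R v) = 0 \<Longrightarrow> \<forall>v\<in>B. u v = 0"
    using B(3) by (simp add: independent_explicit)
  have "c i = 0" if "(\<Sum>i\<in>UNIV. c i *s column i P) = 0" for c i
  proof -
    have "(\<Sum>v\<in>B. c (inv_into UNIV h v) *\<^sub>R v) = (\<Sum>i\<in>UNIV. c i *s column i P)"
      using sum.reindex_bij_betw[OF h, of "\<lambda>v. c (inv_into UNIV h v) *\<^sub>R v", symmetric]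
      by (simp add: column_P scalar_mult_eq_scaleR bij_betw_inv_into_left[OF h])
    then have "\<forall>v\<in>B. c (inv_into UNIV h v) = 0"
      using that by (intro independent_coefficients) simp
    then show ?thesis
      using bij_betwE[OF h] bij_betw_inv_into_left[OF h] by force
  qed
  then have "det P \<noteq> 0"
    unfolding invertible_det_nz[symmetric] invertible_left_inverse
      matrix_left_invertible_independent_columns by blast
  moreover have "inv_into UNIV h p \<noteq> inv_into UNIV h q"
    using B(1) assms(2) bij_betw_inv_into_right[OF h] by (metis insert_subset)
  ultimately show thesis
    using B(1) bij_betw_inv_into_right[OF h] by (intro that) (auto simp: column_P)
qed

lemma charpoly_order_ge_2:
  fixes A :: "real^'n^'n"
  assumes "independent {p, q}" "p \<noteq> q" "A *v p = lam *\<^sub>R p" "A *v q = lam *\<^sub>R q"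
  shows "2 \<le> order lam (charpoly A)"
proof -
  obtain P :: "real^'n^'n" and ja jb
    where P: "ja \<noteq> jb" "column ja P = p" "column jb P = q" "det P \<noteq> 0"
    by (rule invertible_matrix_with_columns[OF assms(1,2)])
  define L where "L = det (\<chi> i j. [:P $ i $ j:])"
  have "poly L lam = det P" unfolding L_def poly_det by simp
  then have "L \<noteq> 0" "order lam L = 0" using P(4) by (auto simp: order_0I)
  then have nonzero: "charpoly A * L \<noteq> 0" using charpoly_nonzero by simp
  have "[:-lam, 1:]\<^sup>2 dvd charpoly A * L"
    unfolding L_def using P(1) by (rule charpoly_mult_det_divisible) (simp_all add: P(2,3) assms(3,4))
  then have "2 \<le> order lam (charpoly A * L)"
    using order_divides[of lam 2 "charpoly A * L"] nonzero by simp
  also have "\<dots> = order lam (charpoly A)"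
    using order_mult[OF nonzero] \<open>order lam L = 0\<close> by simp
  finally show ?thesis .
qed

lemma eig_min2_le_orthogonal_eigenvalue:
  fixes A :: "real^'n^'n"
  assumes w: "w \<noteq> 0" "A *v w = eig_min A *\<^sub>R w"
    and x: "x \<noteq> 0" "A *v x = nu *\<^sub>R x"
    and "w \<bullet> x = 0" "eig_min A \<le> nu"
  shows "eig_min2 A \<le> nu"
proof (cases "2 \<le> order (eig_min A) (charpoly A)")
  case True
  then show ?thesis using \<open>eig_min A \<le> nu\<close> by (simp add: eig_min2_def)
next
  case False
  have "independent {w, x}"
    using \<open>w \<bullet> x = 0\<close> w(1) x(1)
    by (intro pairwise_orthogonal_independent) (auto simp: pairwise_def orthogonal_def inner_commute)
  moreover have "w \<noteq> x" using \<open>w \<bullet> x = 0\<close> w(1) by auto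
  ultimately have "nu \<noteq> eig_min A"
    using False charpoly_order_ge_2[of w x A "eig_min A"] w(2) x(2) by auto
  then have "nu \<in> {t. poly (charpoly A) t = 0 \<and> t > eig_min A}"
    using \<open>eig_min A \<le> nu\<close> x charpoly_root_iff_eigenvalue by auto
  moreover have "finite {t. poly (charpoly A) t = 0 \<and> t > eig_min A}"
    using finite_charpoly_roots by (rule finite_subset[rotated]) auto
  ultimately show ?thesis
    using False by (simp add: eig_min2_def Min_le)
qed

lemma eig_min2_le_on_orthogonal_complement:
  fixes A :: "real^'n^'n"
  assumes sym: "transpose A = A" and w: "norm w = 1"
    and min: "\<And>x. (w \<bullet> (A *v w)) * (norm x)\<^sup>2 \<le> x \<bullet> (A *v x)"
    and "w \<bullet> y = 0"
  shows "eig_min2 A * (norm y)\<^sup>2 \<le> y \<bullet> (A *v y)"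
proof (cases "y = 0")
  case False
  note eigen_w = rayleigh_global_min_eig_min[OF sym w min]
  define m where "m = w \<bullet> (A *v w)"
  have "A *v w = m *\<^sub>R w" unfolding m_def by (rule eigen_w(1))
  let ?U = "{y. w \<bullet> y = 0}"
  have invariant: "A *v z \<in> ?U" if "z \<in> ?U" for z
    using that symmetric_inner_matrix_vector[OF sym, of w z] \<open>A *v w = m *\<^sub>R w\<close>
    by (simp add: inner_commute)
  obtain x where x: "x \<in> ?U" "norm x = 1"
    and x_min: "\<And>z. z \<in> ?U \<Longrightarrow> (x \<bullet> (A *v x)) * (norm z)\<^sup>2 \<le> z \<bullet> (A *v z)"
    using rayleigh_min_exists[OF subspace_hyperplane, of y w A] \<open>w \<bullet> y = 0\<close> False by auto
  define nu where "nu = x \<bullet> (A *v x)"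
  have "eig_min2 A \<le> nu"
  proof (rule eig_min2_le_orthogonal_eigenvalue)
    show "w \<noteq> 0" "x \<noteq> 0" using w x(2) by auto
    show "A *v w = eig_min A *\<^sub>R w" using eigen_w by simp
    show "A *v x = nu *\<^sub>R x"
      unfolding nu_def using rayleigh_min_eigenvector[OF sym subspace_hyperplane invariant x x_min] .
    show "w \<bullet> x = 0" using x(1) by simp
    show "eig_min A \<le> nu" using min[of x] x(2) eigen_w(2) by (simp add: nu_def)
  qed
  then have "eig_min2 A * (norm y)\<^sup>2 \<le> nu * (norm y)\<^sup>2" by (simp add: mult_right_mono)
  also have "\<dots> \<le> y \<bullet> (A *v y)" using x_min \<open>w \<bullet> y = 0\<close> by (simp add: nu_def)
  finally show ?thesis .
qed simp

definition rotq_pairing :: "real^3 \<Rightarrow> real^3 \<Rightarrow> real^4^4" where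
  "rotq_pairing x y = (\<chi> i j.
     if i = 1 \<and> j = 1 then y$1*x$1 + y$2*x$2 + y$3*x$3
     else if i = 2 \<and> j = 2 then y$1*x$1 - y$2*x$2 - y$3*x$3
     else if i = 3 \<and> j = 3 then - y$1*x$1 + y$2*x$2 - y$3*x$3
     else if i = 4 \<and> j = 4 then - y$1*x$1 - y$2*x$2 + y$3*x$3
     else if (i = 1 \<and> j = 2) \<or> (i = 2 \<and> j = 1) then y$3*x$2 - y$2*x$3
     else if (i = 1 \<and> j = 3) \<or> (i = 3 \<and> j = 1) then y$1*x$3 - y$3*x$1
     else if (i = 1 \<and> j = 4) \<or> (i = 4 \<and> j = 1) then y$2*x$1 - y$1*x$2
     else if (i = 2 \<and> j = 3) \<or> (i = 3 \<and> j = 2) then y$1*x$2 + y$2*x$1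
     else if (i = 2 \<and> j = 4) \<or> (i = 4 \<and> j = 2) then y$1*x$3 + y$3*x$1
     else y$2*x$3 + y$3*x$2)"

lemma symmetric_rotq_pairing: "transpose (rotq_pairing x y) = rotq_pairing x y"
  unfolding rotq_pairing_def transpose_def
  by (rule vec_eq_iff[THEN iffD2]) (auto simp: vec_eq_iff forall_4)

lemma quadratic_form_rotq_pairing: "w \<bullet> (rotq_pairing x y *v w) = y \<bullet> (rotq w *v x)"
  unfolding rotq_pairing_def rotq_def Let_def
  by (simp add: inner_vec_def matrix_vector_mult_def sum_4 sum_3 algebra_simps power2_eq_square)

lemma norm_rotq_mult: "(norm (rotq w *v x))\<^sup>2 = (w \<bullet> w)\<^sup>2 * (norm x)\<^sup>2"
  unfolding rotq_def Let_def power2_norm_eq_inner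
  by (simp add: inner_vec_def matrix_vector_mult_def sum_4 sum_3) algebra

lemma quadratic_form_Qmat_explicit:
  assumes "norm w = 1"
  shows "w \<bullet> ((((norm x)\<^sup>2 + (norm y)\<^sup>2) *\<^sub>R mat 1 - 2 *\<^sub>R rotq_pairing x y) *v w)
           = (norm (y - rotq w *v x))\<^sup>2"
proof -
  have "w \<bullet> w = 1" using assms by (simp add: dot_square_norm)
  then show ?thesis
    using norm_rotq_mult[of w x] quadratic_form_rotq_pairing[of w x y]
    by (simp add: matrix_vector_mult_diff_rdistrib scaleR_matrix_vector_assoc[symmetric]
        power2_norm_eq_inner inner_diff_left inner_diff_right inner_commute)
qed

lemma Qmat_eq: "Qmat x y = ((norm x)\<^sup>2 + (norm y)\<^sup>2) *\<^sub>R mat 1 - 2 *\<^sub>R rotq_pairing x y"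
  unfolding Qmat_def
proof (rule the_equality)
  let ?Q = "((norm x)\<^sup>2 + (norm y)\<^sup>2) *\<^sub>R mat 1 - 2 *\<^sub>R rotq_pairing x y"
  have sym: "transpose ?Q = ?Q"
    by (simp add: transpose_diff transpose_scalar symmetric_rotq_pairing)
  then show "transpose ?Q = ?Q \<and> (\<forall>w. norm w = 1 \<longrightarrow> w \<bullet> (?Q *v w) = (norm (y - rotq w *v x))\<^sup>2)"
    using quadratic_form_Qmat_explicit by blast
  fix Q assume Q: "transpose Q = Q \<and> (\<forall>w. norm w = 1 \<longrightarrow> w \<bullet> (Q *v w) = (norm (y - rotq w *v x))\<^sup>2)"
  show "Q = ?Q"
  proof (rule symmetric_matrix_eqI)
    show "transpose Q = Q" using Q by blast
    show "transpose ?Q = ?Q" by (rule sym)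
    show "z \<bullet> (Q *v z) = z \<bullet> (?Q *v z)" for z
      by (rule quadratic_form_eq_on_sphere) (use Q quadratic_form_Qmat_explicit in simp)
  qed
qed

lemma psd_Qmat: "psd (Qmat x y)"
  unfolding psd_def
proof (intro conjI allI)
  show "transpose (Qmat x y) = Qmat x y"
    by (simp add: Qmat_eq transpose_diff transpose_scalar symmetric_rotq_pairing)
  fix z :: "real^4"
  have "0 \<le> sgn z \<bullet> (Qmat x y *v sgn z)"
  proof (cases "z = 0")
    case False
    then have "norm (sgn z) = 1" by (simp add: norm_sgn)
    then show ?thesis unfolding Qmat_eq by (simp add: quadratic_form_Qmat_explicit)
  qed simp
  then show "0 \<le> z \<bullet> (Qmat x y *v z)"
    using quadratic_form_ge_by_sgn[of 0 z] by simp
qed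

lemma quadratic_form_blk:
  assumes "u $ 1 = z $ 1" "u $ 2 = z $ 2" "u $ 3 = z $ 3"
  shows "z \<bullet> (blk T *v z) = u \<bullet> (T *v u)"
  using assms
  by (simp add: blk_def idx43_def inner_vec_def matrix_vector_mult_def sum_4 sum_3 algebra_simps)

lemma transpose_hcat_mult_components:
  "(transpose (hcat V w) *v x) $ 1 = (transpose V *v x) $ 1"
  "(transpose (hcat V w) *v x) $ 2 = (transpose V *v x) $ 2"
  "(transpose (hcat V w) *v x) $ 3 = (transpose V *v x) $ 3"
  "(transpose (hcat V w) *v x) $ 4 = w \<bullet> x"
  by (simp_all only: transpose_matrix_vector vector_matrix_mult_def,
      simp_all add: hcat_def idx43_def inner_vec_def mult.commute)

lemma quadratic_form_hcat_blk:
  "x \<bullet> ((hcat V w ** blk T ** transpose (hcat V w)) *v x)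
     = (transpose V *v x) \<bullet> (T *v (transpose V *v x))"
proof -
  have "x \<bullet> ((hcat V w ** blk T ** transpose (hcat V w)) *v x)
      = (transpose (hcat V w) *v x) \<bullet> (blk T *v (transpose (hcat V w) *v x))"
    using quadratic_form_conjugate[where V = "transpose (hcat V w)" and M = "blk T" and u = x] by simp
  also have "\<dots> = (transpose V *v x) \<bullet> (T *v (transpose V *v x))"
    by (rule quadratic_form_blk) (simp_all only: transpose_hcat_mult_components)
  finally show ?thesis .
qed

lemma symmetric_hcat_blk:
  assumes "transpose T = T"
  shows "transpose (hcat V w ** blk T ** transpose (hcat V w)) = hcat V w ** blk T ** transpose (hcat V w)"
proof -
  have "transpose (blk T) = blk T"
    using assms by (simp add: vec_eq_iff blk_def transpose_def idx43_def)
  then show ?thesis by (simp add: matrix_transpose_mul matrix_mul_assoc)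
qed

lemma orthonormal_completion_decomposition:
  fixes V :: "real^3^4" and w x :: "real^4"
  assumes "transpose V *v w = 0" "transpose V ** V = mat 1" "norm w = 1"
  shows "x = V *v (transpose V *v x) + (w \<bullet> x) *\<^sub>R w"
proof -
  define H where "H = hcat V w"
  have VV: "(\<Sum>i\<in>UNIV. V $ i $ a * V $ i $ b) = (if a = b then 1 else 0)" for a b
    using assms(2) unfolding vec_eq_iff by (simp add: matrix_matrix_mult_def transpose_def mat_def)
  have Vw: "(\<Sum>i\<in>UNIV. V $ i $ a * w $ i) = 0" "(\<Sum>i\<in>UNIV. w $ i * V $ i $ a) = 0" for a
    using arg_cong[OF assms(1), of "\<lambda>v. v $ a"]
    by (simp_all add: matrix_vector_mult_def transpose_def mult.commute)
  have ww: "(\<Sum>i\<in>UNIV. w $ i * w $ i) = 1"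
    using assms(3) by (metis inner_vec_def power2_norm_eq_inner one_power2 inner_real_def)
  have "transpose H ** H = mat 1"
    unfolding vec_eq_iff
    by (simp add: H_def hcat_def idx43_def matrix_matrix_mult_def transpose_def mat_def forall_4 VV Vw ww)
  then have "H ** transpose H = mat 1" by (simp add: matrix_left_right_inverse)
  then have "x = H *v (transpose H *v x)" by (simp only: matrix_vector_mul_assoc matrix_vector_mul_lid)
  also have "\<dots> = V *v (transpose V *v x) + (w \<bullet> x) *\<^sub>R w"
  proof -
    have H: "(H *v z) $ i = V$i$1 * z$1 + V$i$2 * z$2 + V$i$3 * z$3 + w$i * z$4" for z i
      by (simp add: H_def hcat_def idx43_def matrix_vector_mult_def sum_4)
    have V: "(V *v u) $ i = V$i$1 * u$1 + V$i$2 * u$2 + V$i$3 * u$3" for u i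
      by (simp add: matrix_vector_mult_def sum_3)
    show ?thesis
      unfolding vec_eq_iff H_def
      by (simp only: H[unfolded H_def] V transpose_hcat_mult_components vector_add_component
          vector_scaleR_component) (simp add: algebra_simps)
  qed
  finally show ?thesis .
qed

section \<open>The certificate\<close>

lemma tls_obj_eventually_quadratic:
  fixes Q :: "nat \<Rightarrow> real^4^4"
  assumes "\<And>i. i \<in> {1..l} \<Longrightarrow> w \<bullet> (Q i *v w) < c2 i"
  shows "\<forall>\<^sub>F v in nhds w. tls_obj l Q c2 v = v \<bullet> ((\<Sum>i=1..l. Q i) *v v)"
proof -
  have "\<forall>\<^sub>F v in nhds w. \<forall>i\<in>{1..l}. v \<bullet> (Q i *v v) < c2 i"
  proof (rule eventually_ball_finite[OF finite_atLeastAtMost], rule ballI)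
    fix i assume "i \<in> {1..l}"
    have "open {v. v \<bullet> (Q i *v v) < c2 i}"
      by (intro open_Collect_less continuous_intros linear_continuous_on matrix_vector_mul_linear)
    then show "\<forall>\<^sub>F v in nhds w. v \<bullet> (Q i *v v) < c2 i"
      using eventually_nhds_in_open assms[OF \<open>i \<in> {1..l}\<close>] by fastforce
  qed
  then show ?thesis
    by (rule eventually_mono) (simp add: tls_obj_def quadratic_form_sum)
qed

lemma tls_minimizer_spectral:
  fixes Q :: "nat \<Rightarrow> real^4^4" and l :: nat
  assumes sym: "\<And>i. transpose (Q i) = Q i" and w0: "norm w0 = 1"
    and min: "\<forall>w::real^4. norm w = 1 \<longrightarrow> tls_obj l Q c2 w0 \<le> tls_obj l Q c2 w"
    and inliers: "\<And>i. i \<in> {1..l} \<Longrightarrow> w0 \<bullet> (Q i *v w0) < c2 i"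
  defines "A \<equiv> \<Sum>i=1..l. Q i"
  shows "A *v w0 = (w0 \<bullet> (A *v w0)) *\<^sub>R w0" and "eig_min A = w0 \<bullet> (A *v w0)"
    and "\<And>y. w0 \<bullet> y = 0 \<Longrightarrow> eig_min2 A * (norm y)\<^sup>2 \<le> y \<bullet> (A *v y)"
proof -
  have near: "\<forall>\<^sub>F w in nhds w0. tls_obj l Q c2 w = w \<bullet> (A *v w)"
    unfolding A_def by (rule tls_obj_eventually_quadratic[OF inliers])
  have at_w0: "tls_obj l Q c2 w0 = w0 \<bullet> (A *v w0)"
    using eventually_nhds_x_imp_x[OF near] .
  have "\<forall>\<^sub>F w in nhds w0. norm w = 1 \<longrightarrow> w0 \<bullet> (A *v w0) \<le> w \<bullet> (A *v w)"
    using near by (rule eventually_mono) (metis min at_w0)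
  moreover have sym_A: "transpose A = A" by (simp add: A_def transpose_sum sym)
  ultimately have global_min: "(w0 \<bullet> (A *v w0)) * (norm x)\<^sup>2 \<le> x \<bullet> (A *v x)" for x
    using rayleigh_local_min_global w0 by blast
  show "A *v w0 = (w0 \<bullet> (A *v w0)) *\<^sub>R w0" and "eig_min A = w0 \<bullet> (A *v w0)"
    using rayleigh_global_min_eig_min[OF sym_A w0 global_min] by blast+
  show "eig_min2 A * (norm y)\<^sup>2 \<le> y \<bullet> (A *v y)" if "w0 \<bullet> y = 0" for y
    using eig_min2_le_on_orthogonal_complement[OF sym_A w0 global_min that] .
qed

text \<open>\<open>mu\<close> and \<open>zeta * mu\<close> play the roles of \<open>eig_min\<close> and \<open>eig_min2\<close> of \<open>\<Sum>i=1..l. Q i\<close>;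
  the main theorem derives the assumptions from the optimality of \<open>w0\<close>.\<close>

locale tls_certificate =
  fixes l :: nat and Q :: "nat \<Rightarrow> real^4^4" and w0 :: "real^4" and V0 :: "real^3^4"
    and mu zeta :: real
  assumes two_le_l: "2 \<le> l"
    and psd_Q: "\<And>i. psd (Q i)"
    and w0_unit: "norm w0 = 1"
    and V0_orthogonal_w0: "transpose V0 *v w0 = 0"
    and V0_orthonormal: "transpose V0 ** V0 = mat 1"
    and w0_eigenvector: "(\<Sum>i=1..l. Q i) *v w0 = mu *\<^sub>R w0"
    and spectral_gap: "\<And>y. w0 \<bullet> y = 0 \<Longrightarrow> zeta * mu * (norm y)\<^sup>2 \<le> y \<bullet> ((\<Sum>i=1..l. Q i) *v y)"
    and zeta_ge: "real l / (real l - 1) \<le> zeta"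
begin

abbreviation A where "A \<equiv> \<Sum>i=1..l. Q i"

definition alpha where "alpha = (zeta - real l / (real l - 1)) / zeta"

definition beta where "beta = 1 / (zeta * (real l - 1))"

definition T where
  "T i = alpha *\<^sub>R (transpose V0 ** Q i ** V0) + beta *\<^sub>R (\<Sum>j=1..l. transpose V0 ** Q j ** V0)
         - (mu / real l) *\<^sub>R mat 1"

definition S where "S i = hcat V0 w0 ** blk (T i) ** transpose (hcat V0 w0)"

definition d where
  "d i = mu / real l - w0 \<bullet> (Q i *v w0) + eig_max (\<Sum>j\<in>{1..l}-{i}. Q i - Q j) / (zeta * (real l - 1))"

lemma symmetric_Q: "transpose (Q i) = Q i"
  using psd_Q by (simp add: psd_def)

lemma symmetric_A: "transpose A = A"
  by (simp add: transpose_sum symmetric_Q)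

lemma quadratic_form_Q_nonneg: "0 \<le> x \<bullet> (Q i *v x)"
  using psd_Q by (simp add: psd_def)

lemma sum_quadratic_form_w0: "(\<Sum>i=1..l. w0 \<bullet> (Q i *v w0)) = mu"
proof -
  have "w0 \<bullet> w0 = 1" using w0_unit by (simp add: dot_square_norm)
  then show ?thesis using w0_eigenvector by (simp flip: quadratic_form_sum)
qed

lemma mu_nonneg: "0 \<le> mu"
  using sum_quadratic_form_w0 quadratic_form_Q_nonneg by (metis sum_nonneg)

lemma alpha_beta:
  shows "0 \<le> alpha" and "0 < beta" and "alpha + real l * beta = 1"
    and "beta * (zeta * mu) = mu / (real l - 1)"
proof -
  have "0 < real l - 1" "1 < real l / (real l - 1)" using two_le_l by simp_all
  then have "0 < zeta" using zeta_ge by linarith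
  show "0 \<le> alpha" unfolding alpha_def using zeta_ge \<open>0 < zeta\<close> by simp
  show "0 < beta" unfolding beta_def using \<open>0 < zeta\<close> \<open>0 < real l - 1\<close> by simp
  show "alpha + real l * beta = 1"
    unfolding alpha_def beta_def using \<open>0 < zeta\<close>
    by (simp add: diff_divide_distrib divide_divide_eq_left mult.commute)
  show "beta * (zeta * mu) = mu / (real l - 1)"
    unfolding beta_def using \<open>0 < zeta\<close> by simp
qed

lemma V0_isometry: "(V0 *v u) \<bullet> (V0 *v u) = u \<bullet> u"
  using inner_matrix_vector_transpose[of "V0 *v u" V0 u] V0_orthonormal
  by (simp add: matrix_vector_mul_assoc)

lemma w0_orthogonal_V0: "w0 \<bullet> (V0 *v u) = 0"
  using inner_matrix_vector_transpose[of w0 V0 u] V0_orthogonal_w0 by simp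

lemma V0_w0_decomposition: "z = V0 *v (transpose V0 *v z) + (w0 \<bullet> z) *\<^sub>R w0"
  by (rule orthonormal_completion_decomposition[OF V0_orthogonal_w0 V0_orthonormal w0_unit])

lemma norm_add_scaleR_w0:
  assumes "w0 \<bullet> y = 0"
  shows "(norm (y + s *\<^sub>R w0))\<^sup>2 = (norm y)\<^sup>2 + s\<^sup>2"
  using norm_add_Pythagorean[of y "s *\<^sub>R w0"] assms w0_unit
  by (simp add: orthogonal_def inner_commute power_mult_distrib)

lemma quadratic_form_A_add_scaleR_w0:
  assumes "w0 \<bullet> y = 0"
  shows "(y + s *\<^sub>R w0) \<bullet> (A *v (y + s *\<^sub>R w0)) = y \<bullet> (A *v y) + s\<^sup>2 * mu"
proof -
  have "w0 \<bullet> w0 = 1" using w0_unit by (simp add: dot_square_norm)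
  then have "w0 \<bullet> (A *v w0) = mu" unfolding w0_eigenvector by simp
  moreover have "y \<bullet> (A *v w0) = 0" unfolding w0_eigenvector using assms by (simp add: inner_commute)
  ultimately show ?thesis unfolding quadratic_form_add_scaleR[OF symmetric_A] by simp
qed

lemma symmetric_T: "transpose (T i) = T i"
  unfolding T_def
  by (simp add: transpose_diff transpose_add transpose_scalar transpose_sum matrix_transpose_mul
      matrix_mul_assoc symmetric_Q)

lemma symmetric_S: "transpose (S i) = S i"
  unfolding S_def by (rule symmetric_hcat_blk[OF symmetric_T])

lemma quadratic_form_T:
  "u \<bullet> (T i *v u) = alpha * ((V0 *v u) \<bullet> (Q i *v (V0 *v u))) + beta * ((V0 *v u) \<bullet> (A *v (V0 *v u)))
     - mu / real l * (u \<bullet> u)"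
  unfolding T_def
  by (simp add: matrix_vector_mult_diff_rdistrib matrix_vector_mult_add_rdistrib
      scaleR_matrix_vector_assoc[symmetric] inner_diff_right inner_add_right quadratic_form_conjugate
      quadratic_form_sum)

lemma quadratic_form_S: "z \<bullet> (S i *v z) = (transpose V0 *v z) \<bullet> (T i *v (transpose V0 *v z))"
  unfolding S_def by (rule quadratic_form_hcat_blk)

lemma sum_S: "(\<Sum>i=1..l. S i) = (\<Sum>i=1..l. Q i - (w0 \<bullet> (Q i *v w0)) *\<^sub>R mat 1)"
proof (rule symmetric_matrix_eqI)
  show "transpose (\<Sum>i=1..l. S i) = (\<Sum>i=1..l. S i)"
    by (simp add: transpose_sum symmetric_S)
  show "transpose (\<Sum>i=1..l. Q i - (w0 \<bullet> (Q i *v w0)) *\<^sub>R mat 1) = (\<Sum>i=1..l. Q i - (w0 \<bullet> (Q i *v w0)) *\<^sub>R mat 1)"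
    by (simp add: transpose_sum transpose_diff transpose_scalar symmetric_Q)
  fix z :: "real^4"
  define u where "u = transpose V0 *v z"
  define y where "y = V0 *v u"
  define s where "s = w0 \<bullet> z"
  have z: "z = y + s *\<^sub>R w0" using V0_w0_decomposition[of z] by (simp add: y_def u_def s_def)
  have "w0 \<bullet> y = 0" by (simp add: y_def w0_orthogonal_V0)
  have "u \<bullet> u = (norm y)\<^sup>2" by (simp add: y_def V0_isometry dot_square_norm[symmetric])
  have "z \<bullet> ((\<Sum>i=1..l. S i) *v z)
      = (\<Sum>i=1..l. alpha * (y \<bullet> (Q i *v y)) + beta * (y \<bullet> (A *v y)) - mu / real l * (u \<bullet> u))"
    unfolding quadratic_form_sum quadratic_form_S quadratic_form_T u_def[symmetric] y_def[symmetric] ..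
  also have "\<dots> = alpha * (\<Sum>i=1..l. y \<bullet> (Q i *v y)) + real l * (beta * (y \<bullet> (A *v y)))
      - real l * (mu / real l * (u \<bullet> u))"
    by (simp add: sum.distrib sum_subtractf sum_distrib_left)
  also have "\<dots> = (alpha + real l * beta) * (y \<bullet> (A *v y)) - mu * (u \<bullet> u)"
    using two_le_l by (simp add: quadratic_form_sum algebra_simps)
  also have "\<dots> = y \<bullet> (A *v y) - mu * (norm y)\<^sup>2"
    using alpha_beta(3) \<open>u \<bullet> u = (norm y)\<^sup>2\<close> by simp
  also have "\<dots> = z \<bullet> (A *v z) - mu * (norm z)\<^sup>2"
    unfolding z quadratic_form_A_add_scaleR_w0[OF \<open>w0 \<bullet> y = 0\<close>] norm_add_scaleR_w0[OF \<open>w0 \<bullet> y = 0\<close>]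
    by (simp add: algebra_simps)
  also have "\<dots> = z \<bullet> ((\<Sum>i=1..l. Q i - (w0 \<bullet> (Q i *v w0)) *\<^sub>R mat 1) *v z)"
    unfolding quadratic_form_sum
    by (simp add: matrix_vector_mult_diff_rdistrib scaleR_matrix_vector_assoc[symmetric] inner_diff_right
        sum_subtractf quadratic_form_sum dot_square_norm flip: sum_distrib_right sum_quadratic_form_w0)
  finally show "z \<bullet> ((\<Sum>i=1..l. S i) *v z) = z \<bullet> ((\<Sum>i=1..l. Q i - (w0 \<bullet> (Q i *v w0)) *\<^sub>R mat 1) *v z)" .
qed

lemma psd_S: "psd (S i)"
  unfolding psd_def
proof (intro conjI allI)
  show "transpose (S i) = S i" by (rule symmetric_S)
  fix z :: "real^4"
  define u where "u = transpose V0 *v z"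
  define y where "y = V0 *v u"
  have "0 \<le> alpha * (y \<bullet> (Q i *v y))"
    using alpha_beta(1) quadratic_form_Q_nonneg by simp
  moreover have "mu / real l * (u \<bullet> u) \<le> beta * (y \<bullet> (A *v y))"
  proof -
    have "mu / real l \<le> mu / (real l - 1)"
      using mu_nonneg two_le_l by (simp add: frac_le)
    then have "mu / real l * (u \<bullet> u) \<le> mu / (real l - 1) * (u \<bullet> u)"
      by (rule mult_right_mono) simp
    then have "mu / real l * (u \<bullet> u) \<le> beta * (zeta * mu) * (u \<bullet> u)"
      by (simp only: alpha_beta(4))
    also have "\<dots> = beta * (zeta * mu * (norm y)\<^sup>2)"
      by (simp add: y_def V0_isometry dot_square_norm[symmetric])
    also have "\<dots> \<le> beta * (y \<bullet> (A *v y))"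
      using spectral_gap[of y] alpha_beta(2) by (simp add: y_def w0_orthogonal_V0)
    finally show ?thesis .
  qed
  ultimately show "0 \<le> z \<bullet> (S i *v z)"
    unfolding quadratic_form_S quadratic_form_T u_def[symmetric] y_def[symmetric] by linarith
qed

lemma quadratic_form_S_shift:
  fixes i :: nat and c :: real and z :: "real^4"
  defines "E \<equiv> \<Sum>j\<in>{1..l}-{i}. Q i - Q j"
    and "y \<equiv> V0 *v (transpose V0 *v z)" and "s \<equiv> w0 \<bullet> z"
  shows "z \<bullet> ((S i + c *\<^sub>R mat 1 - Q i) *v z)
           = (c - w0 \<bullet> (Q i *v w0)) * (norm z)\<^sup>2 - 2 * s * (y \<bullet> (Q i *v w0)) - d i * (norm y)\<^sup>2
             + beta * (eig_max E * (norm y)\<^sup>2 - (real l * (y \<bullet> (Q i *v y)) - y \<bullet> (A *v y)))"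
proof -
  have z: "z = y + s *\<^sub>R w0" using V0_w0_decomposition[of z] by (simp add: y_def s_def)
  have "w0 \<bullet> y = 0" by (simp add: y_def w0_orthogonal_V0)
  have norm_z: "(norm z)\<^sup>2 = (norm y)\<^sup>2 + s\<^sup>2"
    using norm_add_scaleR_w0[OF \<open>w0 \<bullet> y = 0\<close>, of s] z by simp
  have "(transpose V0 *v z) \<bullet> (transpose V0 *v z) = (norm y)\<^sup>2"
    by (simp add: y_def V0_isometry dot_square_norm[symmetric])
  then have S: "z \<bullet> (S i *v z) = alpha * (y \<bullet> (Q i *v y)) + beta * (y \<bullet> (A *v y)) - mu / real l * (norm y)\<^sup>2"
    unfolding quadratic_form_S quadratic_form_T y_def by simp
  have Q: "z \<bullet> (Q i *v z) = y \<bullet> (Q i *v y) + 2 * s * (y \<bullet> (Q i *v w0)) + s\<^sup>2 * (w0 \<bullet> (Q i *v w0))"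
    unfolding z quadratic_form_add_scaleR[OF symmetric_Q] ..
  have shift: "z \<bullet> ((S i + c *\<^sub>R mat 1 - Q i) *v z) = z \<bullet> (S i *v z) + c * (norm z)\<^sup>2 - z \<bullet> (Q i *v z)"
    by (simp add: matrix_vector_mult_diff_rdistrib matrix_vector_mult_add_rdistrib dot_square_norm
        scaleR_matrix_vector_assoc[symmetric] inner_diff_right inner_add_right)
  have alpha: "alpha = 1 - real l * beta" using alpha_beta(3) by simp
  have d: "d i = mu / real l - w0 \<bullet> (Q i *v w0) + beta * eig_max E"
    by (simp add: d_def beta_def E_def)
  show ?thesis
    unfolding shift S Q alpha d norm_z by (simp add: algebra_simps)
qed

lemma pd_S_shift:
  assumes i: "i \<in> {1..l}"
    and c: "w0 \<bullet> (Q i *v w0) + norm (Q i *v w0) + (\<bar>d i\<bar> + d i) / 2 < c"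
  shows "pd (S i + c *\<^sub>R mat 1 - Q i)"
  unfolding pd_def
proof (intro conjI allI impI)
  show "transpose (S i + c *\<^sub>R mat 1 - Q i) = S i + c *\<^sub>R mat 1 - Q i"
    by (simp add: transpose_diff transpose_add transpose_scalar symmetric_S symmetric_Q)
  fix z :: "real^4"
  assume "z \<noteq> 0"
  define E where "E = (\<Sum>j\<in>{1..l}-{i}. Q i - Q j)"
  define y where "y = V0 *v (transpose V0 *v z)"
  define s where "s = w0 \<bullet> z"
  have identity: "z \<bullet> ((S i + c *\<^sub>R mat 1 - Q i) *v z)
      = (c - w0 \<bullet> (Q i *v w0)) * (norm z)\<^sup>2 - 2 * s * (y \<bullet> (Q i *v w0)) - d i * (norm y)\<^sup>2
        + beta * (eig_max E * (norm y)\<^sup>2 - (real l * (y \<bullet> (Q i *v y)) - y \<bullet> (A *v y)))"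
    unfolding E_def y_def s_def by (rule quadratic_form_S_shift)
  have norm_z: "(norm z)\<^sup>2 = (norm y)\<^sup>2 + s\<^sup>2"
    using norm_add_scaleR_w0[of y s] V0_w0_decomposition[of z]
    by (simp add: y_def s_def w0_orthogonal_V0)
  define dplus where "dplus = (\<bar>d i\<bar> + d i) / 2"
  have "0 < (norm z)\<^sup>2" using \<open>z \<noteq> 0\<close> by simp
  then have "0 < (c - w0 \<bullet> (Q i *v w0) - norm (Q i *v w0) - dplus) * (norm z)\<^sup>2"
    using c unfolding dplus_def by (intro mult_pos_pos) linarith+
  moreover have "2 * s * (y \<bullet> (Q i *v w0)) \<le> norm (Q i *v w0) * (norm z)\<^sup>2"
    unfolding norm_z by (rule cross_term_le)
  moreover have "d i * (norm y)\<^sup>2 \<le> dplus * (norm z)\<^sup>2"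
    unfolding norm_z dplus_def by (cases "0 \<le> d i") (simp_all add: mult_left_mono mult_nonpos_nonneg)
  moreover have "0 \<le> beta * (eig_max E * (norm y)\<^sup>2 - (real l * (y \<bullet> (Q i *v y)) - y \<bullet> (A *v y)))"
    using sum_differences_le_eig_max[where Q = Q and x = y, OF symmetric_Q i] alpha_beta(2) by (simp add: E_def)
  moreover have "(c - w0 \<bullet> (Q i *v w0)) * (norm z)\<^sup>2
      = (c - w0 \<bullet> (Q i *v w0) - norm (Q i *v w0) - dplus) * (norm z)\<^sup>2
        + norm (Q i *v w0) * (norm z)\<^sup>2 + dplus * (norm z)\<^sup>2"
    by (simp add: algebra_simps)
  ultimately show "0 < z \<bullet> ((S i + c *\<^sub>R mat 1 - Q i) *v z)"
    unfolding identity by linarith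
qed

end

theorem lemma3p8:
  fixes l :: nat
    and R0 :: "real^3^3"
    and x y eps :: "nat \<Rightarrow> real^3"
    and c2 :: "nat \<Rightarrow> real"
    and w0 :: "real^4"
    and V0 :: "real^3^4"
  defines "Q \<equiv> (\<lambda>i. Qmat (x i) (y i))"
  defines "zeta \<equiv> eig_min2 (\<Sum>i=1..l. Q i) / eig_min (\<Sum>i=1..l. Q i)"
  defines "d \<equiv> (\<lambda>i. (\<Sum>k=1..l. w0 \<bullet> (Q k *v w0)) / real l - w0 \<bullet> (Q i *v w0)
                 + eig_max (\<Sum>j\<in>{1..l}-{i}. Q i - Q j) / (zeta * (real l - 1)))"
  defines "T \<equiv> (\<lambda>i. ((zeta - real l / (real l - 1)) / zeta) *\<^sub>R (transpose V0 ** Q i ** V0)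
                 + (1 / (zeta * (real l - 1))) *\<^sub>R (\<Sum>j=1..l. transpose V0 ** Q j ** V0)
                 - ((\<Sum>k=1..l. w0 \<bullet> (Q k *v w0)) / real l) *\<^sub>R mat 1)"
  defines "S \<equiv> (\<lambda>i. hcat V0 w0 ** blk (T i) ** transpose (hcat V0 w0))"
  assumes hl: "l \<ge> 2"
    and hR0: "orthogonal_matrix R0" "det R0 = 1"
    and hy: "\<forall>i\<in>{1..l}. y i = R0 *v x i + eps i"
    and hc: "\<forall>i\<in>{1..l}. c2 i \<ge> 0"
    and hw0: "norm w0 = 1"
    and hmin: "\<forall>w::real^4. norm w = 1 \<longrightarrow> tls_obj l Q c2 w0 \<le> tls_obj l Q c2 w"
    and hzeta: "zeta \<ge> real l / (real l - 1)"
    and hci: "\<forall>i\<in>{1..l}. c2 i > w0 \<bullet> (Q i *v w0) + norm (Q i *v w0) + (\<bar>d i\<bar> + d i) / 2"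
    and hV1: "transpose V0 *v w0 = 0"
    and hV2: "transpose V0 ** V0 = mat 1"
  shows "(\<Sum>i=1..l. S i) = (\<Sum>i=1..l. Q i - (w0 \<bullet> (Q i *v w0)) *\<^sub>R mat 1)
         \<and> (\<forall>i\<in>{1..l}. psd (S i))
         \<and> (\<forall>i\<in>{1..l}. pd (S i + c2 i *\<^sub>R mat 1 - Q i))"
proof -
  have psd_Q: "\<And>i. psd (Q i)" by (simp add: Q_def psd_Qmat)
  then have sym_Q: "\<And>i. transpose (Q i) = Q i" by (simp add: psd_def)
  define A where "A = (\<Sum>i=1..l. Q i)"
  define mu where "mu = (\<Sum>k=1..l. w0 \<bullet> (Q k *v w0))"
  have mu: "w0 \<bullet> (A *v w0) = mu" by (simp add: A_def mu_def quadratic_form_sum)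
  have inliers: "w0 \<bullet> (Q i *v w0) < c2 i" if "i \<in> {1..l}" for i
  proof -
    have "0 \<le> (\<bar>d i\<bar> + d i) / 2" by simp
    then show ?thesis using bspec[OF hci that] norm_ge_zero[of "Q i *v w0"] by linarith
  qed
  note spectral = tls_minimizer_spectral[OF sym_Q hw0 hmin inliers, folded A_def, unfolded mu]
  \<comment> \<open>\<open>zeta = eig_min2 A / mu\<close> and \<open>x / 0 = 0\<close>, so the bound on \<open>zeta\<close> also rules out \<open>mu = 0\<close>.\<close>
  have "0 < zeta" using hl by (simp add: order_less_le_trans[OF _ hzeta])
  then have "zeta * mu = eig_min2 A" using spectral(2) by (auto simp: zeta_def A_def)
  interpret cert: tls_certificate l Q w0 V0 mu zeta
    using hl psd_Q hw0 hV1 hV2 spectral(1,3) hzeta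
    by unfold_locales (simp_all add: A_def \<open>zeta * mu = eig_min2 A\<close>)
  have "T = cert.T"
    unfolding T_def mu_def[symmetric] by (simp add: fun_eq_iff cert.T_def cert.alpha_def cert.beta_def)
  then have "S = cert.S"
    by (simp add: fun_eq_iff S_def cert.S_def)
  moreover have "d = cert.d"
    unfolding d_def mu_def[symmetric] by (simp add: fun_eq_iff cert.d_def)
  ultimately show ?thesis
    using cert.sum_S cert.psd_S cert.pd_S_shift hci by simp
qed

end
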